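(* Let $n$ be a positive integer that is not a power of $2$, let $A$ be an abelian group of order $n$ and let $m$ be the number of elements of $A$ of order at most $2$. Then the number of inverse-closed subsets $S\subseteq A$ for which there exist subgroups $H,K$ with $1<H\leq K<A$ such that $S\setminus K$ is a union of $H$-cosets is at most $2^{m/2+11n/24+2(\log_2 n)^2}$.
   Context: A subset $S$ of a group is inverse-closed if $S^{-1}=S$. *)

theory Defs
  imports "HOL-Algebra.Algebra"
begin

definition inverse_closed :: "('a, 'b) monoid_scheme \<Rightarrow> 'a set \<Rightarrow> bool" where
  "inverse_closed G S \<longleftrightarrow> S \<subseteq> carrier G \<and> (\<lambda>x. inv\<^bsub>G\<^esub> x) ` S = S"

end

theory Submission
  imports Defs
begin

(* 1. An involution f of a finite set U has at most 2^((|U| + |Fix f|)/2) invariant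
      subsets (induction removing one orbit at a time).
   2. Every subgroup is generated by at most log2 n elements, so there are at most
      n^(log2 n) subgroups and at most 2^(2 (log2 n)^2) pairs (H, K).
   3. For a fixed pair, S is determined by S /\ K, an inversion-invariant subset of K, and
      by the family of H-cosets outside K contained in S, an invariant subset of the outer
      cosets under inversion.  By 1 this gives at most 2^(e/2) sets, where
      e = |K| + |two_torsion G /\ K| + #outer cosets + #inversion-invariant outer cosets.
   4. Elementary group theory shows 12 e <= 12 |two_torsion G| + 11 n; the case |H| = 2
      uses that n is not a power of 2.
   Summing the bound of 3-4 over the pairs of 2 gives the theorem. *)

definition involution_on :: "'x set \<Rightarrow> ('x \<Rightarrow> 'x) \<Rightarrow> bool" where
  "involution_on U f \<longleftrightarrow> (\<forall>x\<in>U. f x \<in> U \<and> f (f x) = x)"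

definition invariant_subsets :: "'x set \<Rightarrow> ('x \<Rightarrow> 'x) \<Rightarrow> 'x set set" where
  "invariant_subsets U f = {Q. Q \<subseteq> U \<and> f ` Q = Q}"

lemma involution_on_inj: "involution_on U f \<Longrightarrow> inj_on f U"
  unfolding involution_on_def by (metis inj_onI)

lemma involution_on_Diff_orbit:
  assumes "involution_on U f" "x \<in> U"
  shows "involution_on (U - {x, f x}) f"
  unfolding involution_on_def
proof
  fix y assume y: "y \<in> U - {x, f x}"
  have fx: "f x \<in> U" "f (f x) = x" and fy: "f y \<in> U" "f (f y) = y"
    using assms y by (auto simp: involution_on_def)
  then have "f y \<noteq> x" "f y \<noteq> f x" using y by auto
  then show "f y \<in> U - {x, f x} \<and> f (f y) = y" using fy by simp
qed

lemma finite_invariant_subsets: "finite U \<Longrightarrow> finite (invariant_subsets U f)"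
  unfolding invariant_subsets_def by simp

lemma invariant_subsetI:
  assumes "involution_on U f" "V \<subseteq> U" "\<And>x. x \<in> V \<Longrightarrow> f x \<in> V"
  shows "V \<in> invariant_subsets U f"
proof -
  have "f ` V = V"
  proof
    show "f ` V \<subseteq> V" using assms(3) by blast
    show "V \<subseteq> f ` V"
    proof
      fix x assume "x \<in> V"
      then have "x = f (f x)" "f x \<in> V" using assms unfolding involution_on_def by auto
      then show "x \<in> f ` V" by blast
    qed
  qed
  then show ?thesis using assms(2) unfolding invariant_subsets_def by blast
qed

lemma invariant_subset_orbit_iff:
  assumes "Q \<in> invariant_subsets U f" "involution_on U f" "x \<in> U"
  shows "f x \<in> Q \<longleftrightarrow> x \<in> Q"
proof -
  have Q: "f ` Q = Q" and fx: "f (f x) = x" using assms by (auto simp: invariant_subsets_def involution_on_def)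
  show ?thesis
  proof
    assume "f x \<in> Q"
    then have "f (f x) \<in> Q" using Q by blast
    then show "x \<in> Q" using fx by simp
  next
    assume "x \<in> Q"
    then show "f x \<in> Q" using Q by blast
  qed
qed

(* An invariant subset is determined by its part off the orbit of x and by whether it
   contains x; hence removing an orbit at most halves the number of invariant subsets. *)
lemma card_invariant_subsets_Diff_orbit:
  assumes "finite U" "involution_on U f" "x \<in> U"
  shows "card (invariant_subsets U f) \<le> 2 * card (invariant_subsets (U - {x, f x}) f)"
proof -
  let ?O = "{x, f x}"
  let ?r = "\<lambda>Q. (Q - ?O, x \<in> Q)"
  have "inj_on ?r (invariant_subsets U f)"
  proof (rule inj_onI)
    fix Q R assume "Q \<in> invariant_subsets U f" "R \<in> invariant_subsets U f" "?r Q = ?r R"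
    then show "Q = R" using invariant_subset_orbit_iff[OF _ assms(2,3)] by blast
  qed
  moreover have "?r ` invariant_subsets U f \<subseteq> invariant_subsets (U - ?O) f \<times> UNIV"
  proof (rule image_subsetI)
    fix Q assume Q: "Q \<in> invariant_subsets U f"
    have QU: "Q \<subseteq> U" and fQ: "f ` Q = Q" using Q by (auto simp: invariant_subsets_def)
    have fx: "f x \<in> U" "f (f x) = x" using assms(2,3) by (auto simp: involution_on_def)
    have "f ` (Q - ?O) = f ` Q - f ` ?O"
      using QU fx assms(3) by (intro inj_on_image_set_diff[OF involution_on_inj[OF assms(2)]]) auto
    also have "\<dots> = Q - ?O" using fQ fx(2) by (simp add: insert_commute)
    finally have "f ` (Q - ?O) = Q - ?O" .
    then show "?r Q \<in> invariant_subsets (U - ?O) f \<times> UNIV"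
      using QU unfolding invariant_subsets_def by blast
  qed
  moreover have "finite (invariant_subsets (U - ?O) f)"
    using assms(1) by (simp add: finite_invariant_subsets)
  ultimately have "card (invariant_subsets U f) \<le> card (invariant_subsets (U - ?O) f \<times> (UNIV :: bool set))"
    by (intro card_inj_on_le) simp_all
  then show ?thesis by (simp add: card_cartesian_product)
qed

(* Each orbit contributes exactly 2 to |U| + |Fix f|: a fixed point adds 1 to both counts,
   a 2-cycle adds 2 to |U|. *)
lemma card_fixed_points_Diff_orbit:
  assumes "finite U" "involution_on U f" "x \<in> U"
  shows "card U + card {y\<in>U. f y = y}
           = card (U - {x, f x}) + card {y \<in> U - {x, f x}. f y = y} + 2"
proof -
  have fx: "f x \<in> U" "f (f x) = x" using assms(2,3) by (auto simp: involution_on_def)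
  have orbit: "card (U - {x, f x}) = card U - card {x, f x}" "card {x, f x} \<le> card U"
    using assms(1,3) fx by (auto intro: card_Diff_subset card_mono)
  show ?thesis
  proof (cases "f x = x")
    case True
    have "Suc (card ({y\<in>U. f y = y} - {x})) = card {y\<in>U. f y = y}"
      using assms(1,3) True by (intro card_Suc_Diff1) auto
    moreover have "{y \<in> U - {x, f x}. f y = y} = {y\<in>U. f y = y} - {x}" using True by auto
    ultimately show ?thesis using orbit True by auto
  next
    case False
    have "{y \<in> U - {x, f x}. f y = y} = {y\<in>U. f y = y}" using False fx by auto
    then show ?thesis using orbit False by auto
  qed
qed

(* Counting by orbits: an involution f on a finite U has at most 2^((|U| + |Fix f|)/2)
   invariant subsets (in fact exactly that many).  Stated squared to stay in nat. *)
lemma card_invariant_subsets_sq: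
  assumes "finite U" "involution_on U f"
  shows "card (invariant_subsets U f) ^ 2 \<le> 2 ^ (card U + card {x\<in>U. f x = x})"
  using assms
proof (induction "card U" arbitrary: U rule: less_induct)
  case less
  show ?case
  proof (cases "U = {}")
    case True
    then have "invariant_subsets U f = {{}}" by (auto simp: invariant_subsets_def)
    then show ?thesis using True by simp
  next
    case False
    then obtain x where x: "x \<in> U" by blast
    let ?U' = "U - {x, f x}"
    have "card ?U' < card U" using x less.prems(1) by (intro psubset_card_mono) auto
    then have IH: "card (invariant_subsets ?U' f) ^ 2 \<le> 2 ^ (card ?U' + card {y\<in>?U'. f y = y})"
      using less.hyps less.prems(1) involution_on_Diff_orbit[OF less.prems(2) x] by blast
    have "card (invariant_subsets U f) ^ 2 \<le> (2 * card (invariant_subsets ?U' f)) ^ 2"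
      using card_invariant_subsets_Diff_orbit[OF less.prems x] by (rule power_mono) simp
    also have "\<dots> = 4 * card (invariant_subsets ?U' f) ^ 2" by (simp add: power_mult_distrib)
    also have "\<dots> \<le> 4 * 2 ^ (card ?U' + card {y\<in>?U'. f y = y})" using IH by simp
    also have "\<dots> = 2 ^ (card U + card {y\<in>U. f y = y})"
      unfolding card_fixed_points_Diff_orbit[OF less.prems x] by (simp add: power_add)
    finally show ?thesis .
  qed
qed

lemma le_powr_half_of_sq:
  assumes "N ^ 2 \<le> (2::nat) ^ e"
  shows "real N \<le> 2 powr (real e / 2)"
proof -
  have "real N = sqrt (real (N ^ 2))" by simp
  also have "\<dots> \<le> sqrt (2 ^ e)"
    using assms by (metis of_nat_le_iff of_nat_numeral of_nat_power real_sqrt_le_mono)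
  also have "\<dots> = 2 powr (real e / 2)" by (simp add: powr_half_sqrt_powr powr_realpow)
  finally show ?thesis .
qed

corollary card_invariant_subsets:
  assumes "finite U" "involution_on U f"
  shows "real (card (invariant_subsets U f)) \<le> 2 powr (real (card U + card {x\<in>U. f x = x}) / 2)"
  by (rule le_powr_half_of_sq[OF card_invariant_subsets_sq[OF assms]])

lemma dvd_proper_half:
  fixes a b :: nat
  assumes "a dvd b" "a < b"
  shows "2 * a \<le> b"
proof -
  obtain q where q: "b = a * q" using assms(1) by blast
  with assms(2) have "q \<noteq> 0" "q \<noteq> 1" by auto
  then have "2 \<le> q" by linarith
  then show ?thesis using q by (simp add: mult.commute)
qed

(* Lagrange inside the bigger subgroup. *)
lemma (in group) subgroup_card_dvd:
  assumes "subgroup A G" "subgroup B G" "A \<subseteq> B"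
  shows "card A dvd card B"
proof -
  interpret B: group "G\<lparr>carrier := B\<rparr>" using subgroup_imp_group[OF assms(2)] .
  have "subgroup A (G\<lparr>carrier := B\<rparr>)" using subgroup_incl assms by blast
  then have "card (rcosets\<^bsub>G\<lparr>carrier := B\<rparr>\<^esub> A) * card A = card B"
    using B.lagrange by (simp add: order_def)
  then show ?thesis by (metis dvd_triv_right)
qed

lemma (in group) card_proper_subgroup:
  assumes "subgroup A G" "subgroup B G" "A \<subset> B" "finite B"
  shows "2 * card A \<le> card B"
  using dvd_proper_half subgroup_card_dvd[OF assms(1,2)] psubset_card_mono[OF assms(4,3)] assms(3)
  by blast

corollary (in group) card_proper_subgroup_order:
  assumes "finite (carrier G)" "subgroup K G" "K \<noteq> carrier G"
  shows "2 * card K \<le> order G"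
  using card_proper_subgroup[OF assms(2) subgroup_self] assms subgroup.subset
  unfolding order_def by blast

lemma (in group) generate_subgroup_eq: "subgroup L G \<Longrightarrow> generate G L = L"
  using generateI[of L L] by blast

lemma (in group) generate_absorb:
  assumes "A \<subseteq> carrier G" "B \<subseteq> carrier G"
  shows "generate G (generate G A \<union> B) = generate G (A \<union> B)"
proof
  have sub: "subgroup (generate G (A \<union> B)) G" using assms by (intro generate_is_subgroup) auto
  have "generate G A \<subseteq> generate G (A \<union> B)" by (rule mono_generate) (rule Un_upper1)
  moreover have "B \<subseteq> generate G (A \<union> B)" by (auto intro: generate.incl)
  ultimately show "generate G (generate G A \<union> B) \<subseteq> generate G (A \<union> B)"
    by (rule generate_subgroup_incl[OF Un_least sub])
  have "A \<subseteq> generate G A" by (auto intro: generate.incl)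
  then show "generate G (A \<union> B) \<subseteq> generate G (generate G A \<union> B)"
    by (intro mono_generate Un_mono) simp_all
qed

lemma (in group) generate_insert_doubles:
  assumes "finite H" "subgroup H G" "subgroup L G" "L \<subseteq> H" "x \<in> H" "x \<notin> L"
  shows "subgroup (generate G (insert x L)) G" "generate G (insert x L) \<subseteq> H"
    and "2 * card L \<le> card (generate G (insert x L))"
proof -
  have xL: "insert x L \<subseteq> carrier G"
    using assms(5) subgroup.subset[OF assms(2)] subgroup.subset[OF assms(3)] by blast
  then show sub: "subgroup (generate G (insert x L)) G" by (rule generate_is_subgroup)
  show le: "generate G (insert x L) \<subseteq> H"
    using assms(4,5) by (intro generate_subgroup_incl[OF _ assms(2)]) auto
  have "insert x L \<subseteq> generate G (insert x L)" by (auto intro: generate.incl)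
  then have "L \<subset> generate G (insert x L)" using assms(6) by blast
  then show "2 * card L \<le> card (generate G (insert x L))"
    using card_proper_subgroup[OF assms(3) sub] finite_subset[OF le assms(1)] by blast
qed

lemma (in group) subgroup_extend_generators:
  assumes "finite (carrier G)" "subgroup H G" "subgroup L G" "L \<subseteq> H"
  shows "\<exists>xs. set xs \<subseteq> H \<and> generate G (L \<union> set xs) = H \<and> 2 ^ length xs * card L \<le> card H"
  using assms(3,4)
proof (induction "card H - card L" arbitrary: L rule: less_induct)
  case less
  have finH: "finite H" using finite_subset[OF subgroup.subset[OF assms(2)] assms(1)] .
  show ?case
  proof (cases "L = H")
    case True
    then show ?thesis using generate_subgroup_eq[OF assms(2)] by (intro exI[of _ "[]"]) simp
  next
    case False
    then obtain x where x: "x \<in> H" "x \<notin> L" using less.prems(2) by blast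
    define L' where "L' = generate G (insert x L)"
    note L' = generate_insert_doubles[OF finH assms(2) less.prems x, folded L'_def]
    have "card L > 0"
      using subgroup.one_closed[OF less.prems(1)] finite_subset[OF less.prems(2) finH] card_gt_0_iff
      by blast
    then have "card H - card L' < card H - card L" using L'(3) card_mono[OF finH L'(2)] by linarith
    then obtain xs where xs: "set xs \<subseteq> H" "generate G (L' \<union> set xs) = H"
        "2 ^ length xs * card L' \<le> card H"
      using less.hyps L'(1,2) by blast
    have "generate G (L \<union> set (x # xs)) = generate G (L' \<union> set xs)"
      unfolding L'_def using generate_absorb[of "insert x L" "set xs"] x(1) xs(1) less.prems(2)
        subgroup.subset[OF assms(2)] by auto
    then have gen: "generate G (L \<union> set (x # xs)) = H" using xs(2) by simp
    have "2 ^ length (x # xs) * card L = 2 ^ length xs * (2 * card L)" by simp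
    also have "\<dots> \<le> 2 ^ length xs * card L'" using L'(3) by simp
    finally have "2 ^ length (x # xs) * card L \<le> card H" using xs(3) by linarith
    then show ?thesis using gen xs(1) x(1) by (intro exI[of _ "x # xs"]) auto
  qed
qed

(* Padding with 1, every subgroup is generated by floor(log2 n) elements, so there are at
   most n^(log2 n) subgroups. *)
lemma (in group) card_subgroups_le:
  assumes "finite (carrier G)"
  shows "card {H. subgroup H G} \<le> order G ^ nat \<lfloor>log 2 (order G)\<rfloor>"
proof -
  define k where "k = nat \<lfloor>log 2 (order G)\<rfloor>"
  define Xs where "Xs = {xs. set xs \<subseteq> carrier G \<and> length xs = k}"
  have "{H. subgroup H G} \<subseteq> (\<lambda>xs. generate G ({\<one>} \<union> set xs)) ` Xs"
  proof
    fix H assume "H \<in> {H. subgroup H G}"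
    then have H: "subgroup H G" by simp
    obtain xs where xs: "set xs \<subseteq> H" "generate G ({\<one>} \<union> set xs) = H" "2 ^ length xs \<le> card H"
      using subgroup_extend_generators[OF assms H triv_subgroup] subgroup.one_closed[OF H] by auto
    have "card H \<le> order G"
      using H assms subgroup.subset unfolding order_def by (intro card_mono)
    then have "real (length xs) \<le> log 2 (order G)" using xs(3) by (intro le_log2_of_power) simp
    then have len: "length xs \<le> k" unfolding k_def by linarith
    define ys where "ys = xs @ replicate (k - length xs) \<one>"
    have "ys \<in> Xs" using xs(1) subgroup.subset[OF H] len by (auto simp: ys_def Xs_def)
    moreover have "{\<one>} \<union> set ys = {\<one>} \<union> set xs" by (auto simp: ys_def)
    ultimately show "H \<in> (\<lambda>xs. generate G ({\<one>} \<union> set xs)) ` Xs"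
      using xs(2) by (intro image_eqI[of _ _ ys]) simp_all
  qed
  moreover have "finite Xs" using finite_lists_length_eq[OF assms] unfolding Xs_def .
  ultimately have "card {H. subgroup H G} \<le> card ((\<lambda>xs. generate G ({\<one>} \<union> set xs)) ` Xs)"
    by (intro card_mono finite_imageI)
  also have "\<dots> \<le> card Xs" by (rule card_image_le[OF \<open>finite Xs\<close>])
  also have "\<dots> = order G ^ k" using card_lists_length_eq[OF assms] unfolding Xs_def order_def .
  finally show ?thesis unfolding k_def .
qed

corollary (in group) card_subgroups_powr:
  assumes "finite (carrier G)"
  shows "real (card {H. subgroup H G}) \<le> 2 powr (log 2 (order G))\<^sup>2"
proof -
  define L where "L = log 2 (order G)"
  have n: "real (order G) = 2 powr L" "order G > 0"
    using assms unfolding L_def by (simp_all add: order_gt_0_iff_finite)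
  then have "L \<ge> 0" unfolding L_def by simp
  then have k: "real (nat \<lfloor>L\<rfloor>) \<le> L" by linarith
  have "real (card {H. subgroup H G}) \<le> real (order G) ^ nat \<lfloor>L\<rfloor>"
    using card_subgroups_le[OF assms] unfolding L_def by (metis of_nat_le_iff of_nat_power)
  also have "\<dots> = 2 powr (L * real (nat \<lfloor>L\<rfloor>))" by (simp add: n powr_realpow[symmetric] powr_powr)
  also have "\<dots> \<le> 2 powr (L * L)" using k \<open>L \<ge> 0\<close> by (intro powr_mono mult_left_mono) auto
  finally show ?thesis by (simp add: L_def power2_eq_square)
qed

definition two_torsion :: "('a, 'b) monoid_scheme \<Rightarrow> 'a set" where
  "two_torsion G = {x \<in> carrier G. x \<otimes>\<^bsub>G\<^esub> x = \<one>\<^bsub>G\<^esub>}"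

lemma (in comm_group) two_torsion_subgroup: "subgroup (two_torsion G) G"
proof (rule subgroupI)
  show "two_torsion G \<subseteq> carrier G" "two_torsion G \<noteq> {}"
    using one_closed by (auto simp: two_torsion_def)
next
  fix a assume "a \<in> two_torsion G"
  then show "inv a \<in> two_torsion G"
    by (auto simp: two_torsion_def simp flip: inv_mult)
next
  fix a b assume "a \<in> two_torsion G" "b \<in> two_torsion G"
  moreover have "(a \<otimes> b) \<otimes> (a \<otimes> b) = (a \<otimes> a) \<otimes> (b \<otimes> b)" if "a \<in> carrier G" "b \<in> carrier G"
    using that by (simp add: m_ac)
  ultimately show "a \<otimes> b \<in> two_torsion G" by (auto simp: two_torsion_def)
qed

lemma (in group) two_torsion_eq_ord_le_2:
  assumes "finite (carrier G)"
  shows "two_torsion G = {x \<in> carrier G. ord x \<le> 2}"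
proof -
  have "ord x \<le> 2 \<longleftrightarrow> x \<otimes> x = \<one>" if x: "x \<in> carrier G" for x
  proof -
    have "x \<otimes> x = \<one> \<longleftrightarrow> ord x dvd 2"
      using pow_eq_id[OF x, of 2] x by (simp add: numeral_2_eq_2)
    moreover have "ord x dvd 2 \<longleftrightarrow> ord x \<le> 2"
    proof
      assume "ord x \<le> 2"
      then have "ord x = 1 \<or> ord x = 2" using ord_ge_1[OF assms x] by linarith
      then show "ord x dvd 2" by auto
    qed (simp add: dvd_imp_le)
    ultimately show ?thesis by simp
  qed
  then show ?thesis by (auto simp: two_torsion_def)
qed

lemma (in group) inv_eq_self_iff:
  assumes "x \<in> carrier G" shows "inv x = x \<longleftrightarrow> x \<otimes> x = \<one>"
proof
  assume "inv x = x" then show "x \<otimes> x = \<one>" using r_inv[OF assms] by simp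
next
  assume "x \<otimes> x = \<one>" then show "inv x = x" using inv_equality[of x x] assms by simp
qed

(* The square roots of any h form a coset of two_torsion G (or are empty). *)
lemma (in comm_group) card_square_roots_le:
  assumes "finite (carrier G)"
  shows "card {x \<in> carrier G. x \<otimes> x = h} \<le> card (two_torsion G)"
proof (cases "{x \<in> carrier G. x \<otimes> x = h} = {}")
  case False
  then obtain r where r: "r \<in> carrier G" "r \<otimes> r = h" by blast
  have "inj_on (\<lambda>x. inv r \<otimes> x) {x \<in> carrier G. x \<otimes> x = h}"
    using r(1) by (intro inj_onI) auto
  moreover have "(\<lambda>x. inv r \<otimes> x) ` {x \<in> carrier G. x \<otimes> x = h} \<subseteq> two_torsion G"
  proof (rule image_subsetI)
    fix x assume x: "x \<in> {x \<in> carrier G. x \<otimes> x = h}"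
    have xc: "x \<in> carrier G" using x by simp
    have "(inv r \<otimes> x) \<otimes> (inv r \<otimes> x) = (inv r \<otimes> inv r) \<otimes> (x \<otimes> x)"
      using r(1) xc by (simp add: m_ac)
    also have "\<dots> = inv (r \<otimes> r) \<otimes> (x \<otimes> x)" using r(1) by (simp add: inv_mult)
    also have "\<dots> = \<one>" using x r by auto
    finally show "inv r \<otimes> x \<in> two_torsion G" using xc r(1) by (simp add: two_torsion_def)
  qed
  moreover have "finite (two_torsion G)" using assms by (simp add: two_torsion_def)
  ultimately show ?thesis by (rule card_inj_on_le)
qed (simp only: card.empty le0)

lemma (in group) union_rcosets_card:
  assumes "subgroup H G" "finite (carrier G)" "C \<subseteq> rcosets H"
  shows "card (\<Union>C) = card C * card H"
proof -
  have sub: "\<Union>C \<subseteq> carrier G" "C \<subseteq> Pow (carrier G)"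
    using assms(3) rcosets_subset_PowG[OF assms(1)] by auto
  have "card H * card C = card (\<Union>C)"
  proof (rule card_partition)
    show "finite C" "finite (\<Union>C)"
      using sub assms(2) finite_subset by (blast, blast)
    fix c assume "c \<in> C"
    then show "card c = card H"
      using card_rcosets_equal[OF _ subgroup.subset[OF assms(1)]] assms(3) by (metis subsetD)
  next
    fix c1 c2 assume "c1 \<in> C" "c2 \<in> C" "c1 \<noteq> c2"
    then show "c1 \<inter> c2 = {}"
      using rcos_disjoint[OF assms(1)] assms(3) unfolding pairwise_def disjnt_def by blast
  qed
  then show ?thesis by (metis mult.commute)
qed

lemma (in group) inv_invariant_coset_squares:
  assumes "subgroup H G" "c \<in> rcosets H" "(\<lambda>x. inv x) ` c = c" "y \<in> c"
  shows "y \<otimes> y \<in> H"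
proof -
  obtain a where a: "a \<in> carrier G" "c = H #> a" using assms(2) unfolding RCOSETS_def by blast
  have Hc: "H \<subseteq> carrier G" using subgroup.subset[OF assms(1)] .
  obtain h1 where h1: "h1 \<in> H" "y = h1 \<otimes> a" using assms(4) a(2) unfolding r_coset_def by blast
  have "inv y \<in> c" using assms(3,4) by blast
  then obtain h2 where h2: "h2 \<in> H" "inv y = h2 \<otimes> a" using a(2) unfolding r_coset_def by blast
  have y: "y \<in> carrier G" using h1 Hc a(1) by auto
  have h: "h1 \<in> carrier G" "h2 \<in> carrier G" using h1(1) h2(1) Hc by auto
  have "y = inv (h2 \<otimes> a)" using h2(2) y by (metis inv_inv)
  also have "\<dots> = inv a \<otimes> inv h2" using h(2) a(1) by (rule inv_mult_group)
  finally have "y \<otimes> y = (h1 \<otimes> a) \<otimes> (inv a \<otimes> inv h2)" using h1(2) by metis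
  also have "\<dots> = h1 \<otimes> inv h2"
    using h a(1) by (simp add: m_assoc inv_solve_left' flip: m_assoc[of a "inv a"])
  finally show ?thesis using h1(1) h2(1) assms(1) by (simp add: subgroup.m_closed subgroup.m_inv_closed)
qed

lemma (in comm_group) inv_rcos:
  assumes "subgroup H G" "a \<in> carrier G"
  shows "(\<lambda>x. inv x) ` (H #> a) = H #> inv a"
proof -
  have Hc: "H \<subseteq> carrier G" using subgroup.subset[OF assms(1)] .
  have coset: "H #> b = (\<lambda>h. h \<otimes> b) ` H" for b unfolding r_coset_def by auto
  have invH: "(\<lambda>h. inv h) ` H = H"
  proof
    show "(\<lambda>h. inv h) ` H \<subseteq> H" using subgroup.m_inv_closed[OF assms(1)] by blast
    show "H \<subseteq> (\<lambda>h. inv h) ` H"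
    proof
      fix h assume h: "h \<in> H"
      then have "h = inv (inv h)" "inv h \<in> H" using Hc subgroup.m_inv_closed[OF assms(1)] by auto
      then show "h \<in> (\<lambda>h. inv h) ` H" by blast
    qed
  qed
  have "(\<lambda>x. inv x) ` (H #> a) = (\<lambda>h. inv h \<otimes> inv a) ` H"
    unfolding coset image_image using Hc assms(2) by (intro image_cong) (auto simp: inv_mult)
  also have "\<dots> = (\<lambda>h. h \<otimes> inv a) ` ((\<lambda>h. inv h) ` H)" by (simp add: image_image)
  finally show ?thesis unfolding invH coset .
qed

lemma odd_prime_factor:
  fixes n :: nat
  assumes "n > 0" "\<not> (\<exists>k. n = 2 ^ k)"
  shows "\<exists>p. Factorial_Ring.prime p \<and> p dvd n \<and> p \<noteq> 2"
proof -
  obtain y where y: "n = 2 ^ multiplicity 2 n * y" "\<not> 2 dvd y"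
    using multiplicity_decompose'[of n 2] assms(1) by force
  have "y \<noteq> 1" using y(1) assms(2) by (metis mult.right_neutral)
  then obtain p where p: "Factorial_Ring.prime p" "p dvd y" using prime_factor_nat by blast
  have "p \<noteq> 2" using p(2) y(2) by blast
  moreover have "p dvd n" using p(2) by (subst y(1)) (rule dvd_mult)
  ultimately show ?thesis using p(1) by blast
qed

(* A finite group whose exponent divides a power of 2 is a 2-group: otherwise Sylow gives
   an element of odd prime order. *)
lemma (in group) exponent_two_power_imp_order_two_power:
  assumes "finite (carrier G)" "\<forall>x\<in>carrier G. x [^] ((2::nat) ^ k) = \<one>"
  shows "\<exists>j. order G = 2 ^ j"
proof (rule ccontr)
  assume "\<nexists>j. order G = 2 ^ j"
  then obtain p where p: "Factorial_Ring.prime p" "p dvd order G" "p \<noteq> 2"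
    using odd_prime_factor assms(1) order_gt_0_iff_finite by blast
  then obtain q where q: "order G = p ^ 1 * q" by auto
  obtain P where P: "subgroup P G" "card P = p"
    using sylow_thm[OF p(1) is_group q assms(1)] by auto
  then have "P \<noteq> {\<one>}" using prime_gt_1_nat[OF p(1)] by auto
  then obtain x where x: "x \<in> P" "x \<noteq> \<one>" using subgroup.one_closed[OF P(1)] by blast
  have xc: "x \<in> carrier G" using x(1) subgroup.subset[OF P(1)] by blast
  have "x [^]\<^bsub>G\<lparr>carrier := P\<rparr>\<^esub> order (G\<lparr>carrier := P\<rparr>) = \<one>\<^bsub>G\<lparr>carrier := P\<rparr>\<^esub>"
    using group.pow_order_eq_1[OF subgroup_imp_group[OF P(1)]] x(1) by simp
  then have "x [^] p = \<one>" using P(2) by (simp add: order_def flip: nat_pow_consistent)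
  then have "ord x dvd p" using pow_eq_id[OF xc] by simp
  moreover have "ord x \<noteq> 1" using ord_eq_1[OF xc] x(2) by simp
  ultimately have "ord x = p" using p(1) by (auto simp: prime_nat_iff)
  moreover have "x [^] ((2::nat) ^ k) = \<one>" using assms(2) xc by blast
  then have "ord x dvd 2 ^ k" using pow_eq_id[OF xc] by blast
  ultimately have "p dvd 2" using prime_dvd_power p(1) by blast
  then have "p \<le> 2" by (simp add: dvd_imp_le)
  then show False using prime_gt_1_nat[OF p(1)] p(3) by linarith
qed

lemma (in group) index_two_squares:
  assumes "subgroup K G" "card (rcosets K) = 2" "x \<in> carrier G"
  shows "x \<otimes> x \<in> K"
proof (cases "x \<in> K")
  case True
  then show ?thesis using subgroup.m_closed[OF assms(1)] by blast
next
  case False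
  have Kc: "K \<subseteq> carrier G" using subgroup.subset[OF assms(1)] .
  have "K #> x \<noteq> K" using rcos_self[OF assms(3,1)] False by blast
  then have "card {K, K #> x} = card (rcosets K)" using assms(2) by simp
  moreover have "{K, K #> x} \<subseteq> rcosets K"
    using subgroup.subgroup_in_rcosets[OF assms(1) is_group] rcosetsI[OF Kc assms(3)] by blast
  moreover have "finite (rcosets K)" by (rule card_ge_0_finite) (simp add: assms(2))
  ultimately have "rcosets K = {K, K #> x}" using card_subset_eq by metis
  then have "carrier G = K \<union> (K #> x)" using rcosets_part_G[OF assms(1)] by simp
  then have "x \<otimes> x \<in> K \<union> (K #> x)" using assms(3) by blast
  moreover have "x \<otimes> x \<notin> K #> x"
  proof
    assume "x \<otimes> x \<in> K #> x"
    then obtain k where k: "k \<in> K" "x \<otimes> x = k \<otimes> x" unfolding r_coset_def by blast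
    then have "x = k" using r_cancel[of x x k] Kc assms(3) by blast
    then show False using False k(1) by simp
  qed
  ultimately show ?thesis by blast
qed

(* For a proper subgroup K of a group whose order is not a power of 2,
   |K| + |two_torsion G /\ K| <= 5n/6.  If K is not inside two_torsion G, the intersection has
   index >= 2 in K; if K is inside it, K has index >= 3, since index 2 would force
   exponent 4. *)
lemma (in comm_group) card_subgroup_two_torsion_bound:
  assumes "finite (carrier G)" "\<nexists>j. order G = 2 ^ j" "subgroup K G" "K \<noteq> carrier G"
  shows "6 * (card K + card (two_torsion G \<inter> K)) \<le> 5 * order G"
proof -
  let ?T = "two_torsion G \<inter> K"
  have T: "subgroup ?T G" using subgroups_Inter_pair[OF two_torsion_subgroup assms(3)] .
  have finK: "finite K" using finite_subset[OF subgroup.subset[OF assms(3)] assms(1)] .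
  have half: "2 * card K \<le> order G" using card_proper_subgroup_order[OF assms(1,3,4)] .
  have lagrange_K: "card (rcosets K) * card K = order G" using lagrange[OF assms(3)] .
  consider "?T \<noteq> K" | "?T = K" "card (rcosets K) = 2" | "?T = K" "card (rcosets K) \<noteq> 2" by blast
  then show ?thesis
  proof cases
    case 1
    then have "2 * card ?T \<le> card K" using card_proper_subgroup[OF T assms(3) _ finK] by blast
    then show ?thesis using half unfolding distrib_left by linarith
  next
    case 2
    have "x [^] ((2::nat) ^ 2) = \<one>" if x: "x \<in> carrier G" for x
    proof -
      have "x \<otimes> x \<in> two_torsion G" using index_two_squares[OF assms(3) 2(2) x] 2(1) by blast
      then have "(x \<otimes> x) \<otimes> (x \<otimes> x) = \<one>" by (simp add: two_torsion_def)
      moreover have "y [^] (2::nat) = y \<otimes> y" if "y \<in> carrier G" for y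
        using that by (simp add: numeral_2_eq_2)
      moreover have "x [^] ((2::nat) ^ 2) = (x [^] (2::nat)) [^] (2::nat)"
        using nat_pow_pow[OF x, of 2 2] by (simp add: power2_eq_square)
      ultimately show ?thesis using x by simp
    qed
    then show ?thesis using exponent_two_power_imp_order_two_power assms(1,2) by blast
  next
    case 3
    have "card K < order G"
      using subgroup.subset[OF assms(3)] assms(1,4) unfolding order_def by (simp add: psubset_card_mono)
    then have "card (rcosets K) \<noteq> 1" using lagrange_K by (metis less_irrefl mult_1)
    moreover have "card (rcosets K) \<noteq> 0"
      using lagrange_K assms(1) order_gt_0_iff_finite by (metis less_irrefl mult_0)
    ultimately have "3 \<le> card (rcosets K)" using 3(2) by linarith
    then have "3 * card K \<le> order G" using lagrange_K by (metis mult_le_mono1)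
    moreover have "card (two_torsion G \<inter> K) = card K" using 3(1) by simp
    ultimately show ?thesis by simp
  qed
qed

(* For |H| = 2, the inversion-invariant H-cosets outside K cover only elements with square
   in H, and there are at most 2 |two_torsion G| of those; the ones in K are counted
   separately. *)
lemma (in comm_group) card_inv_invariant_cosets_bound:
  assumes "finite (carrier G)" "subgroup H G" "card H = 2"
  shows "2 * card {c \<in> rcosets H. c \<inter> K = {} \<and> (\<lambda>x. inv x) ` c = c} + card (two_torsion G \<inter> K)
           \<le> 2 * card (two_torsion G)"
proof -
  let ?Fx = "{c \<in> rcosets H. c \<inter> K = {} \<and> (\<lambda>x. inv x) ` c = c}"
  define T where "T = {x \<in> carrier G. x \<otimes> x \<in> H}"
  have finT: "finite T" unfolding T_def using assms(1) by simp
  have "\<Union>?Fx \<subseteq> T - K"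
  proof
    fix y assume "y \<in> \<Union>?Fx"
    then obtain c where c: "c \<in> ?Fx" "y \<in> c" by blast
    then have "y \<otimes> y \<in> H" "y \<notin> K"
      using inv_invariant_coset_squares[OF assms(2), of c y] by blast+
    moreover have "y \<in> carrier G" using c rcosets_subset_PowG[OF assms(2)] by blast
    ultimately show "y \<in> T - K" unfolding T_def by blast
  qed
  then have "card (\<Union>?Fx) \<le> card (T - K)" using finT by (simp add: card_mono)
  moreover have "card (\<Union>?Fx) = card ?Fx * card H"
    by (rule union_rcosets_card[OF assms(2,1)]) blast
  ultimately have Fx: "2 * card ?Fx \<le> card (T - K)" using assms(3) by simp
  have "T = (\<Union>g\<in>H. {x \<in> carrier G. x \<otimes> x = g})" unfolding T_def by blast
  moreover have "finite H" using assms(3) by (metis card.infinite zero_neq_numeral)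
  ultimately have "card T \<le> (\<Sum>g\<in>H. card {x \<in> carrier G. x \<otimes> x = g})"
    using card_UN_le by simp
  also have "\<dots> \<le> card H * card (two_torsion G)"
    using sum_bounded_above[of H "\<lambda>g. card {x \<in> carrier G. x \<otimes> x = g}"]
      card_square_roots_le[OF assms(1)] by simp
  finally have "card T \<le> 2 * card (two_torsion G)" using assms(3) by simp
  moreover have "two_torsion G \<inter> K \<subseteq> T \<inter> K"
    using subgroup.one_closed[OF assms(2)] unfolding T_def two_torsion_def by auto
  then have "card (two_torsion G \<inter> K) \<le> card (T \<inter> K)" using finT by (simp add: card_mono)
  moreover have "card T = card (T \<inter> K) + card (T - K)" using card_Int_Diff[OF finT] .
  ultimately show ?thesis using Fx by linarith
qed

definition outer_cosets :: "('a, 'b) monoid_scheme \<Rightarrow> 'a set \<Rightarrow> 'a set \<Rightarrow> 'a set set" where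
  "outer_cosets G H K = {c \<in> rcosets\<^bsub>G\<^esub> H. c \<inter> K = {}}"

definition coset_structured :: "('a, 'b) monoid_scheme \<Rightarrow> 'a set \<Rightarrow> 'a set \<Rightarrow> 'a set set" where
  "coset_structured G H K = {S. inverse_closed G S \<and> (\<exists>C \<subseteq> rcosets\<^bsub>G\<^esub> H. S - K = \<Union>C)}"

lemma (in group) subgroup_inv_involution:
  "subgroup K G \<Longrightarrow> involution_on K (\<lambda>x. inv x)"
  using subgroup.m_inv_closed subgroup.subset unfolding involution_on_def by (fastforce simp: subsetD)

lemma (in group) finite_outer_cosets:
  assumes "finite (carrier G)" "subgroup H G"
  shows "finite (outer_cosets G H K)"
proof -
  have "outer_cosets G H K \<subseteq> Pow (carrier G)"
    using rcosets_subset_PowG[OF assms(2)] unfolding outer_cosets_def by blast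
  then show ?thesis by (rule finite_subset) (simp add: assms(1))
qed

lemma (in comm_group) outer_cosets_involution:
  assumes "subgroup H G" "subgroup K G"
  shows "involution_on (outer_cosets G H K) (\<lambda>c. (\<lambda>x. inv x) ` c)"
  unfolding involution_on_def
proof
  fix c assume c: "c \<in> outer_cosets G H K"
  then obtain a where a: "a \<in> carrier G" "c = H #> a" unfolding outer_cosets_def RCOSETS_def by blast
  have cG: "c \<subseteq> carrier G" using a r_coset_subset_G subgroup.subset[OF assms(1)] by blast
  have "(\<lambda>x. inv x) ` c = H #> inv a" unfolding a(2) by (rule inv_rcos[OF assms(1) a(1)])
  then have "(\<lambda>x. inv x) ` c \<in> rcosets H" using a(1) subgroup.subset[OF assms(1)] by (simp add: rcosetsI)
  moreover have "(\<lambda>x. inv x) ` c \<inter> K = {}"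
  proof (rule ccontr)
    assume "(\<lambda>x. inv x) ` c \<inter> K \<noteq> {}"
    then obtain y where y: "y \<in> c" "inv y \<in> K" by blast
    then have "inv (inv y) \<in> K" using subgroup.m_inv_closed[OF assms(2)] by blast
    then have "y \<in> K" using y(1) cG by (simp add: subsetD)
    then show False using y(1) c unfolding outer_cosets_def by blast
  qed
  moreover have "(\<lambda>x. inv x) ` (\<lambda>x. inv x) ` c = (\<lambda>x. x) ` c"
    unfolding image_image using cG by (intro image_cong) (auto simp: subsetD)
  ultimately show "(\<lambda>x. inv x) ` c \<in> outer_cosets G H K \<and> (\<lambda>x. inv x) ` (\<lambda>x. inv x) ` c = c"
    unfolding outer_cosets_def by blast
qed

(* For H <= K the outer cosets partition the complement of K. *)
lemma (in group) card_outer_cosets: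
  assumes "finite (carrier G)" "subgroup H G" "subgroup K G" "H \<subseteq> K"
  shows "card (outer_cosets G H K) * card H + card K = order G"
proof -
  have "\<Union>(outer_cosets G H K) = carrier G - K"
  proof
    show "\<Union>(outer_cosets G H K) \<subseteq> carrier G - K"
      using rcosets_subset_PowG[OF assms(2)] unfolding outer_cosets_def by blast
    show "carrier G - K \<subseteq> \<Union>(outer_cosets G H K)"
    proof
      fix x assume x: "x \<in> carrier G - K"
      have "(H #> x) \<inter> K = {}"
      proof (rule ccontr)
        assume "(H #> x) \<inter> K \<noteq> {}"
        then obtain h where h: "h \<in> H" "h \<otimes> x \<in> K" unfolding r_coset_def by blast
        have "inv h \<otimes> (h \<otimes> x) \<in> K"
          using h assms(4) subgroup.m_closed[OF assms(3)] subgroup.m_inv_closed[OF assms(3)] by blast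
        moreover have "inv h \<otimes> (h \<otimes> x) = x"
          using h(1) x subgroup.subset[OF assms(2)] by (simp add: m_assoc[symmetric] subsetD)
        ultimately show False using x by simp
      qed
      moreover have "H #> x \<in> rcosets H" using x subgroup.subset[OF assms(2)] by (simp add: rcosetsI)
      moreover have "x \<in> H #> x" using x rcos_self[OF _ assms(2)] by simp
      ultimately show "x \<in> \<Union>(outer_cosets G H K)" unfolding outer_cosets_def by blast
    qed
  qed
  moreover have "card (\<Union>(outer_cosets G H K)) = card (outer_cosets G H K) * card H"
    by (rule union_rcosets_card[OF assms(2,1)]) (auto simp: outer_cosets_def)
  moreover have "card (carrier G - K) + card K = order G"
  proof -
    have Kc: "K \<subseteq> carrier G" using subgroup.subset[OF assms(3)] .
    then have "finite K" using assms(1) finite_subset by blast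
    then have "card (carrier G - K) = order G - card K" using Kc unfolding order_def by (rule card_Diff_subset)
    moreover have "card K \<le> order G" using Kc assms(1) unfolding order_def by (rule card_mono[rotated])
    ultimately show ?thesis by simp
  qed
  ultimately show ?thesis by simp
qed

lemma outside_part_eq_outer_cosets:
  assumes "S \<in> coset_structured G H K"
  shows "S - K = \<Union>{c \<in> outer_cosets G H K. c \<subseteq> S}"
proof -
  obtain C where C: "C \<subseteq> rcosets\<^bsub>G\<^esub> H" "S - K = \<Union>C"
    using assms unfolding coset_structured_def by blast
  then have "C \<subseteq> {c \<in> outer_cosets G H K. c \<subseteq> S}" unfolding outer_cosets_def by blast
  then show ?thesis using C(2) unfolding outer_cosets_def by blast
qed

lemma (in comm_group) coset_structured_parts:
  assumes "subgroup H G" "subgroup K G" "S \<in> coset_structured G H K"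
  shows "S \<inter> K \<in> invariant_subsets K (\<lambda>x. inv x)"
    and "{c \<in> outer_cosets G H K. c \<subseteq> S}
           \<in> invariant_subsets (outer_cosets G H K) (\<lambda>c. (\<lambda>x. inv x) ` c)"
proof -
  have S: "(\<lambda>x. inv x) ` S = S" using assms(3) unfolding coset_structured_def inverse_closed_def by blast
  show "S \<inter> K \<in> invariant_subsets K (\<lambda>x. inv x)"
    using S subgroup.m_inv_closed[OF assms(2)]
    by (intro invariant_subsetI[OF subgroup_inv_involution[OF assms(2)]]) auto
  show "{c \<in> outer_cosets G H K. c \<subseteq> S}
          \<in> invariant_subsets (outer_cosets G H K) (\<lambda>c. (\<lambda>x. inv x) ` c)"
  proof (rule invariant_subsetI[OF outer_cosets_involution[OF assms(1,2)]])
    fix c assume c: "c \<in> {c \<in> outer_cosets G H K. c \<subseteq> S}"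
    then have "(\<lambda>x. inv x) ` c \<subseteq> S" using S by blast
    moreover have "(\<lambda>x. inv x) ` c \<in> outer_cosets G H K"
      using outer_cosets_involution[OF assms(1,2)] c unfolding involution_on_def by simp
    ultimately show "(\<lambda>x. inv x) ` c \<in> {c \<in> outer_cosets G H K. c \<subseteq> S}" by simp
  qed simp
qed

(* Hence S is determined by a pair of invariant subsets. *)
lemma (in comm_group) card_coset_structured_le:
  assumes "finite (carrier G)" "subgroup H G" "subgroup K G"
  shows "card (coset_structured G H K)
           \<le> card (invariant_subsets K (\<lambda>x. inv x))
             * card (invariant_subsets (outer_cosets G H K) (\<lambda>c. (\<lambda>x. inv x) ` c))"
proof -
  let ?A = "invariant_subsets K (\<lambda>x. inv x)"
    and ?B = "invariant_subsets (outer_cosets G H K) (\<lambda>c. (\<lambda>x. inv x) ` c)"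
  let ?r = "\<lambda>S. (S \<inter> K, {c \<in> outer_cosets G H K. c \<subseteq> S})"
  have "inj_on ?r (coset_structured G H K)"
  proof (rule inj_onI)
    fix S S' assume S: "S \<in> coset_structured G H K" "S' \<in> coset_structured G H K"
      and eq: "?r S = ?r S'"
    then have "S - K = S' - K"
      using outside_part_eq_outer_cosets[OF S(1)] outside_part_eq_outer_cosets[OF S(2)] by simp
    moreover have "S \<inter> K = S' \<inter> K" using eq by simp
    ultimately show "S = S'" by blast
  qed
  moreover have "?r ` coset_structured G H K \<subseteq> ?A \<times> ?B"
    using coset_structured_parts[OF assms(2,3)] by blast
  moreover have "finite (?A \<times> ?B)"
    using finite_subset[OF subgroup.subset[OF assms(3)] assms(1)] finite_outer_cosets[OF assms(1,2)]
    by (simp add: finite_invariant_subsets)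
  ultimately have "card (coset_structured G H K) \<le> card (?A \<times> ?B)" by (rule card_inj_on_le)
  then show ?thesis by (simp add: card_cartesian_product)
qed

(* For |H| >= 3 the outer cosets are few;
   for |H| = 2 the two bounds proved above are combined. *)
lemma (in comm_group) coset_exponent_bound:
  assumes "finite (carrier G)" "\<nexists>j. order G = 2 ^ j"
    and "subgroup H G" "subgroup K G" "H \<noteq> {\<one>}" "H \<subseteq> K" "K \<noteq> carrier G"
  shows "12 * (card K + card (two_torsion G \<inter> K) + card (outer_cosets G H K)
              + card {c \<in> outer_cosets G H K. (\<lambda>x. inv x) ` c = c})
         \<le> 12 * card (two_torsion G) + 11 * order G"
proof -
  let ?U = "outer_cosets G H K"
  let ?Fx = "{c \<in> ?U. (\<lambda>x. inv x) ` c = c}"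
  have cosets: "card ?U * card H + card K = order G" by (rule card_outer_cosets[OF assms(1,3,4,6)])
  have half: "2 * card K \<le> order G" by (rule card_proper_subgroup_order[OF assms(1,4,7)])
  have torsion: "card (two_torsion G \<inter> K) \<le> card (two_torsion G)"
    using assms(1) by (intro card_mono) (auto simp: two_torsion_def)
  have "card H \<ge> 2"
  proof -
    obtain h where h: "h \<in> H" "h \<noteq> \<one>" using assms(5) subgroup.one_closed[OF assms(3)] by blast
    then have "{\<one>, h} \<subseteq> H" using subgroup.one_closed[OF assms(3)] by blast
    moreover have "finite H" using assms(1) subgroup.subset[OF assms(3)] finite_subset by blast
    ultimately have "card {\<one>, h} \<le> card H" by (rule card_mono[rotated])
    then show ?thesis using h(2) by simp
  qed
  show ?thesis
  proof (cases "card H = 2")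
    case True
    have "2 * card ?Fx + card (two_torsion G \<inter> K) \<le> 2 * card (two_torsion G)"
      using card_inv_invariant_cosets_bound[OF assms(1,3) True, of K]
      unfolding outer_cosets_def by simp
    moreover have "6 * (card K + card (two_torsion G \<inter> K)) \<le> 5 * order G"
      by (rule card_subgroup_two_torsion_bound[OF assms(1,2,4,7)])
    moreover have "card ?U * 2 + card K = order G" using cosets True by simp
    ultimately show ?thesis unfolding distrib_left by linarith
  next
    case False
    then have "3 * card ?U \<le> card ?U * card H" using \<open>card H \<ge> 2\<close> by simp
    moreover have "card ?Fx \<le> card ?U"
      using finite_outer_cosets[OF assms(1,3)] by (intro card_mono) auto
    ultimately show ?thesis using cosets half torsion unfolding distrib_left by linarith
  qed
qed

theorem (in comm_group) card_coset_structured: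
  assumes "finite (carrier G)" "\<nexists>j. order G = 2 ^ j"
    and "subgroup H G" "subgroup K G" "H \<noteq> {\<one>}" "H \<subseteq> K" "K \<noteq> carrier G"
  shows "real (card (coset_structured G H K))
           \<le> 2 powr (real (card (two_torsion G)) / 2 + 11 * real (order G) / 24)"
proof -
  let ?U = "outer_cosets G H K" and ?\<iota> = "\<lambda>c. (\<lambda>x. inv x) ` c"
  let ?a = "card K + card (two_torsion G \<inter> K)"
  let ?b = "card ?U + card {c \<in> ?U. ?\<iota> c = c}"
  have "{x \<in> K. inv x = x} = two_torsion G \<inter> K"
    using subgroup.subset[OF assms(4)] inv_eq_self_iff by (auto simp: two_torsion_def)
  then have A: "real (card (invariant_subsets K (\<lambda>x. inv x))) \<le> 2 powr (real ?a / 2)"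
    using card_invariant_subsets[OF _ subgroup_inv_involution[OF assms(4)]]
      finite_subset[OF subgroup.subset[OF assms(4)] assms(1)] by simp
  have B: "real (card (invariant_subsets ?U ?\<iota>)) \<le> 2 powr (real ?b / 2)"
    by (rule card_invariant_subsets[OF finite_outer_cosets[OF assms(1,3)]
          outer_cosets_involution[OF assms(3,4)]])
  have "real (card (coset_structured G H K))
          \<le> real (card (invariant_subsets K (\<lambda>x. inv x))) * real (card (invariant_subsets ?U ?\<iota>))"
    using card_coset_structured_le[OF assms(1,3,4)] by (metis of_nat_le_iff of_nat_mult)
  also have "\<dots> \<le> 2 powr (real ?a / 2) * 2 powr (real ?b / 2)"
    using A B by (intro mult_mono) auto
  also have "\<dots> = 2 powr (real (?a + ?b) / 2)" by (simp add: add_divide_distrib flip: powr_add)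
  also have "\<dots> \<le> 2 powr (real (card (two_torsion G)) / 2 + 11 * real (order G) / 24)"
  proof (rule powr_mono)
    have "12 * (?a + ?b) \<le> 12 * card (two_torsion G) + 11 * order G"
      using coset_exponent_bound[OF assms] by (simp add: add.assoc)
    then show "real (?a + ?b) / 2 \<le> real (card (two_torsion G)) / 2 + 11 * real (order G) / 24"
      by linarith
  qed simp
  finally show ?thesis .
qed

lemma card_UN_bounded:
  assumes "finite I" "\<And>i. i \<in> I \<Longrightarrow> real (card (A i)) \<le> B"
  shows "real (card (\<Union>i\<in>I. A i)) \<le> real (card I) * B"
proof -
  have "real (card (\<Union>i\<in>I. A i)) \<le> (\<Sum>i\<in>I. real (card (A i)))"
    using card_UN_le[OF assms(1)] by (metis of_nat_le_iff of_nat_sum)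
  also have "\<dots> \<le> real (card I) * B" using sum_bounded_above assms(2) by metis
  finally show ?thesis .
qed

definition admissible_pairs :: "('a, 'b) monoid_scheme \<Rightarrow> ('a set \<times> 'a set) set" where
  "admissible_pairs G = {(H, K). subgroup H G \<and> subgroup K G \<and> H \<noteq> {\<one>\<^bsub>G\<^esub>} \<and> H \<subseteq> K \<and> K \<noteq> carrier G}"

lemma structured_sets_eq_Union:
  "{S. inverse_closed G S \<and>
       (\<exists>H K. subgroup H G \<and> subgroup K G \<and> H \<noteq> {\<one>\<^bsub>G\<^esub>} \<and> H \<subseteq> K \<and> K \<noteq> carrier G \<and>
              (\<exists>C \<subseteq> rcosets\<^bsub>G\<^esub> H. S - K = \<Union>C))}
     = (\<Union>(H, K)\<in>admissible_pairs G. coset_structured G H K)"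
  unfolding admissible_pairs_def coset_structured_def by blast

lemma (in group) card_admissible_pairs:
  assumes "finite (carrier G)"
  shows "finite (admissible_pairs G)"
    and "real (card (admissible_pairs G)) \<le> 2 powr (2 * (log 2 (order G))\<^sup>2)"
proof -
  let ?Sub = "{H. subgroup H G}"
  have "?Sub \<subseteq> Pow (carrier G)" by (auto dest: subgroup.subset)
  then have fin: "finite ?Sub" by (rule finite_subset) (simp add: assms)
  have sub: "admissible_pairs G \<subseteq> ?Sub \<times> ?Sub" by (auto simp: admissible_pairs_def)
  then show "finite (admissible_pairs G)" by (rule finite_subset) (simp add: fin)
  have "card (admissible_pairs G) \<le> card (?Sub \<times> ?Sub)" by (rule card_mono) (simp add: fin, fact sub)
  then have "real (card (admissible_pairs G)) \<le> real (card ?Sub) * real (card ?Sub)"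
    unfolding card_cartesian_product by (simp only: of_nat_mult[symmetric] of_nat_le_iff)
  also have "\<dots> \<le> 2 powr (log 2 (order G))\<^sup>2 * 2 powr (log 2 (order G))\<^sup>2"
    using card_subgroups_powr[OF assms] by (intro mult_mono) auto
  also have "\<dots> = 2 powr (2 * (log 2 (order G))\<^sup>2)" by (simp only: mult_2 flip: powr_add)
  finally show "real (card (admissible_pairs G)) \<le> 2 powr (2 * (log 2 (order G))\<^sup>2)" .
qed

theorem (in comm_group) card_structured_sets:
  assumes "finite (carrier G)" "\<nexists>j. order G = 2 ^ j"
  shows "real (card (\<Union>(H, K)\<in>admissible_pairs G. coset_structured G H K))
           \<le> 2 powr (real (card (two_torsion G)) / 2 + 11 * real (order G) / 24
                      + 2 * (log 2 (order G))\<^sup>2)"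
proof -
  let ?bound = "2 powr (real (card (two_torsion G)) / 2 + 11 * real (order G) / 24)"
  have "real (card (\<Union>(H, K)\<in>admissible_pairs G. coset_structured G H K))
          \<le> real (card (admissible_pairs G)) * ?bound"
  proof (rule card_UN_bounded)
    show "finite (admissible_pairs G)" by (rule card_admissible_pairs(1)[OF assms(1)])
    fix p assume "p \<in> admissible_pairs G"
    moreover obtain H K where p: "p = (H, K)" by (rule prod.exhaust)
    ultimately have "subgroup H G" "subgroup K G" "H \<noteq> {\<one>}" "H \<subseteq> K" "K \<noteq> carrier G"
      unfolding admissible_pairs_def by simp_all
    then have "real (card (coset_structured G H K)) \<le> ?bound" by (rule card_coset_structured[OF assms])
    then show "real (card (case p of (H, K) \<Rightarrow> coset_structured G H K)) \<le> ?bound"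
      unfolding p by simp
  qed
  also have "\<dots> \<le> 2 powr (2 * (log 2 (order G))\<^sup>2) * ?bound"
    using card_admissible_pairs(2)[OF assms(1)] by (rule mult_right_mono) simp
  also have "\<dots> = 2 powr (real (card (two_torsion G)) / 2 + 11 * real (order G) / 24
                      + 2 * (log 2 (order G))\<^sup>2)"
    by (simp add: add_ac flip: powr_add)
  finally show ?thesis .
qed

theorem lemma5p4:
  fixes G :: "('a, 'b) monoid_scheme" and n m :: nat
  assumes "comm_group G"
    and "finite (carrier G)"
    and "n = order G"
    and "n > 0"
    and "\<not> (\<exists>k::nat. n = 2 ^ k)"
    and "m = card {x \<in> carrier G. group.ord G x \<le> 2}"
  shows "real (card {S. inverse_closed G S \<and>
            (\<exists>H K. subgroup H G \<and> subgroup K G \<and> H \<noteq> {\<one>\<^bsub>G\<^esub>} \<and> H \<subseteq> K \<and>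
                   K \<noteq> carrier G \<and>
                   (\<exists>C \<subseteq> rcosets\<^bsub>G\<^esub> H. S - K = \<Union>C))})
         \<le> 2 powr (real m / 2 + 11 * real n / 24 + 2 * (log 2 (real n))\<^sup>2)"
proof -
  interpret comm_group G by (rule assms(1))
  have "m = card (two_torsion G)" using assms(6) two_torsion_eq_ord_le_2[OF assms(2)] by simp
  moreover have "\<nexists>j. order G = 2 ^ j" using assms(3,5) by simp
  ultimately show ?thesis
    unfolding structured_sets_eq_Union using card_structured_sets[OF assms(2)] assms(3) by simp
qed

end
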